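(* Let $g\in\mathbb{Q}[x_1,\dots,x_n]$ be a monic polynomial, and let $g=\prod_{i=1}^m h_i$ be a factorization of $g$ over $\mathbb{Q}$ in which every $h_i\in\mathbb{Q}[x_1,\dots,x_n]$ is monic. Let $N>0$ be the least common multiple of the denominators of the coefficients of $g$. Then for every $i=1,\dots,m$, $N$ is an upper bound for the absolute values of the denominators of the coefficients of $h_i$.
   Context: A fixed monomial order on $\mathbb{Q}[x_1,\dots,x_n]$ is used; a polynomial is monic if its leading coefficient with respect to this order is $1$. Denominators of rational coefficients are taken with the fractions in lowest terms. *)

theory Defs
  imports Complex_Main "HOL-Library.Poly_Mapping"
begin

text \<open>Multivariate polynomials over Q: finitely supported maps from
monomials (exponent vectors, nat =>0 nat, variable i = x_(i+1)) to rational coefficients.\<close>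

type_synonym monom = "nat \<Rightarrow>\<^sub>0 nat"
type_synonym mpoly_q = "monom \<Rightarrow>\<^sub>0 rat"

definition monomial_order :: "(monom \<Rightarrow> monom \<Rightarrow> bool) \<Rightarrow> bool" where
  "monomial_order le \<longleftrightarrow>
     (\<forall>a. le a a) \<and>
     (\<forall>a b c. le a b \<longrightarrow> le b c \<longrightarrow> le a c) \<and>
     (\<forall>a b. le a b \<longrightarrow> le b a \<longrightarrow> a = b) \<and>
     (\<forall>a b. le a b \<or> le b a) \<and>
     wf {(a, b). le a b \<and> a \<noteq> b} \<and>
     (\<forall>a. le 0 a) \<and>
     (\<forall>a b c. le a b \<longrightarrow> le (a + c) (b + c))"

definition lead_monom :: "(monom \<Rightarrow> monom \<Rightarrow> bool) \<Rightarrow> mpoly_q \<Rightarrow> monom" where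
  "lead_monom le p = (THE m. m \<in> Poly_Mapping.keys p \<and> (\<forall>m' \<in> Poly_Mapping.keys p. le m' m))"

definition lead_coeff_mp :: "(monom \<Rightarrow> monom \<Rightarrow> bool) \<Rightarrow> mpoly_q \<Rightarrow> rat" where
  "lead_coeff_mp le p = Poly_Mapping.lookup p (lead_monom le p)"

definition monic_mp :: "(monom \<Rightarrow> monom \<Rightarrow> bool) \<Rightarrow> mpoly_q \<Rightarrow> bool" where
  "monic_mp le p \<longleftrightarrow> p \<noteq> 0 \<and> lead_coeff_mp le p = 1"

definition in_vars :: "nat \<Rightarrow> mpoly_q \<Rightarrow> bool" where
  "in_vars n p \<longleftrightarrow> (\<forall>m \<in> Poly_Mapping.keys p. Poly_Mapping.keys m \<subseteq> {..<n})"

definition denom :: "rat \<Rightarrow> int" where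
  "denom q = snd (quotient_of q)"

definition coeff_denom_lcm :: "mpoly_q \<Rightarrow> int" where
  "coeff_denom_lcm p = Lcm ((\<lambda>m. denom (Poly_Mapping.lookup p m)) ` Poly_Mapping.keys p)"

end

theory Submission
  imports Defs "HOL-Computational_Algebra.Euclidean_Algorithm"
begin

text \<open>Scaling a monic factor \<open>h\<close> by the lcm \<open>L\<^sub>h\<close> of its denominators gives a primitive integer
  polynomial, since \<open>h\<close> has a coefficient \<open>1\<close>. By Gauss's lemma the product of these is again
  primitive, and it equals \<open>P g\<close> with \<open>P = \<Prod> L\<^sub>h\<close>. But the only positive integer \<open>c\<close> for which
  \<open>c g\<close> is a primitive integer polynomial is \<open>N\<close>. Hence \<open>P = N\<close>, so every \<open>L\<^sub>h\<close>, and with it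
  every denominator of \<open>h\<close>, divides \<open>N\<close>.\<close>

lemma monomial_orderD:
  assumes "monomial_order le"
  shows monomial_order_refl: "le a a"
    and monomial_order_trans: "le a b \<Longrightarrow> le b c \<Longrightarrow> le a c"
    and monomial_order_antisym: "le a b \<Longrightarrow> le b a \<Longrightarrow> a = b"
    and monomial_order_total: "le a b \<or> le b a"
    and monomial_order_add_right: "le a b \<Longrightarrow> le (a + c) (b + c)"
  using assms unfolding monomial_order_def by blast+

lemma monomial_order_finite_has_max:
  assumes "monomial_order le" and "finite S" and "S \<noteq> {}"
  obtains x where "x \<in> S" and "\<forall>y\<in>S. le y x"
  using assms(2,3)
proof (induction S arbitrary: thesis rule: finite_ne_induct)
  case (singleton x)
  then show ?case using monomial_order_refl[OF assms(1)] by blast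
next
  case (insert x F)
  obtain m where m: "m \<in> F" "\<forall>y\<in>F. le y m" using insert.IH by blast
  from monomial_order_total[OF assms(1), of m x] show ?case
  proof
    assume "le m x"
    then show ?case
      using insert.prems m monomial_order_refl[OF assms(1)] monomial_order_trans[OF assms(1)]
      by blast
  next
    assume "le x m"
    then show ?case using insert.prems m by blast
  qed
qed

lemma monomial_order_add_eq_imp_eq:
  assumes "monomial_order le" and "le x a" and "le y b" and "x + y = a + b"
  shows "x = a \<and> y = b"
proof -
  have "le (x + y) (a + y)" using assms(2) by (rule monomial_order_add_right[OF assms(1)])
  moreover have "le (a + y) (a + b)"
    using monomial_order_add_right[OF assms(1) assms(3), of a] by (simp add: add.commute)
  ultimately have "a + y = a + b"
    using assms(4) monomial_order_antisym[OF assms(1)] by metis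
  then show ?thesis using assms(4) by simp
qed

lemma lookup_mult_finite:
  fixes f g :: "'k::monoid_add \<Rightarrow>\<^sub>0 'a::semiring_0"
  assumes "finite A" "Poly_Mapping.keys f \<subseteq> A" "finite B" "Poly_Mapping.keys g \<subseteq> B"
  shows "Poly_Mapping.lookup (f * g) k =
    (\<Sum>(a, b)\<in>A \<times> B. Poly_Mapping.lookup f a * Poly_Mapping.lookup g b when k = a + b)"
proof -
  have inner: "(\<Sum>b. Poly_Mapping.lookup g b when k = a + b) =
      (\<Sum>b\<in>B. Poly_Mapping.lookup g b when k = a + b)" for a
    using assms(3,4) by (intro Sum_any.expand_superset) (auto simp: in_keys_iff)
  have "Poly_Mapping.lookup (f * g) k =
      (\<Sum>a. Poly_Mapping.lookup f a * (\<Sum>b\<in>B. Poly_Mapping.lookup g b when k = a + b))"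
    by (simp add: lookup_mult inner)
  also have "\<dots> =
      (\<Sum>a\<in>A. Poly_Mapping.lookup f a * (\<Sum>b\<in>B. Poly_Mapping.lookup g b when k = a + b))"
    using assms(1,2) by (intro Sum_any.expand_superset)
      (use mult_not_zero not_in_keys_iff_lookup_eq_zero in fastforce)+
  finally show ?thesis
    by (simp add: sum.cartesian_product sum_distrib_left mult_when)
qed

text \<open>For \<open>int\<close> coefficients this is the usual notion of a primitive polynomial; in particular
  \<open>0\<close> is not primitive.\<close>

definition primitive_mp :: "('k \<Rightarrow>\<^sub>0 'a::comm_semiring_1) \<Rightarrow> bool" where
  "primitive_mp f \<longleftrightarrow> (\<forall>p. prime_elem p \<longrightarrow> \<not> (\<forall>m. p dvd Poly_Mapping.lookup f m))"

text \<open>For the largest monomials \<open>a\<close> of \<open>f\<close> and \<open>b\<close> of \<open>g\<close> whose coefficients are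
  not divisible by \<open>p\<close>, every other product contributing to the coefficient of \<open>a + b\<close> in
  \<open>f * g\<close> has a factor divisible by \<open>p\<close>.\<close>

lemma prime_elem_not_dvd_coeffs_mult:
  fixes f g :: "monom \<Rightarrow>\<^sub>0 'a::comm_semiring_1_cancel"
  assumes le: "monomial_order le" and p: "prime_elem p"
    and f: "\<not> (\<forall>m. p dvd Poly_Mapping.lookup f m)"
    and g: "\<not> (\<forall>m. p dvd Poly_Mapping.lookup g m)"
  shows "\<not> (\<forall>m. p dvd Poly_Mapping.lookup (f * g) m)"
proof -
  define Sf where "Sf = {m. \<not> p dvd Poly_Mapping.lookup f m}"
  define Sg where "Sg = {m. \<not> p dvd Poly_Mapping.lookup g m}"
  have "Sf \<subseteq> Poly_Mapping.keys f" "Sg \<subseteq> Poly_Mapping.keys g"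
    unfolding Sf_def Sg_def by (auto simp: in_keys_iff)
  then have "finite Sf" "finite Sg" by (auto intro: finite_subset)
  moreover have "Sf \<noteq> {}" "Sg \<noteq> {}" using f g unfolding Sf_def Sg_def by auto
  ultimately obtain a b
    where a: "a \<in> Sf" "\<forall>x\<in>Sf. le x a" and b: "b \<in> Sg" "\<forall>y\<in>Sg. le y b"
    using monomial_order_finite_has_max[OF le] by metis
  define K where "K = Poly_Mapping.keys f \<times> Poly_Mapping.keys g"
  define t where
    "t = (\<lambda>(x, y). Poly_Mapping.lookup f x * Poly_Mapping.lookup g y when a + b = x + y)"
  have "(a, b) \<in> K" using \<open>Sf \<subseteq> _\<close> \<open>Sg \<subseteq> _\<close> a b unfolding K_def by auto
  have "Poly_Mapping.lookup (f * g) (a + b) = sum t K"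
    unfolding K_def t_def
    by (simp add: lookup_mult_finite[of "Poly_Mapping.keys f" _ "Poly_Mapping.keys g"])
  also have "\<dots> = t (a, b) + (\<Sum>xy\<in>K - {(a, b)}. t xy)"
    using \<open>(a, b) \<in> K\<close> by (rule sum.remove[rotated]) (simp add: K_def)
  finally have coeff:
    "Poly_Mapping.lookup (f * g) (a + b) = t (a, b) + (\<Sum>xy\<in>K - {(a, b)}. t xy)" .
  have "p dvd t xy" if other: "xy \<in> K - {(a, b)}" for xy
  proof -
    obtain x y where xy: "xy = (x, y)" "(x, y) \<noteq> (a, b)" using other by (cases xy) auto
    have "x \<notin> Sf \<or> y \<notin> Sg \<or> a + b \<noteq> x + y"
      using monomial_order_add_eq_imp_eq[OF le, of x a y b] a b xy by auto
    then show ?thesis unfolding xy t_def Sf_def Sg_def by (auto simp: when_def)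
  qed
  then have "p dvd (\<Sum>xy\<in>K - {(a, b)}. t xy)" by (rule dvd_sum)
  moreover have "\<not> p dvd t (a, b)"
    using a b p unfolding t_def Sf_def Sg_def by (simp add: prime_elem_dvd_mult_iff)
  ultimately show ?thesis using coeff by (metis dvd_add_left_iff)
qed

lemma primitive_mp_one: "primitive_mp (1 :: 'k::zero \<Rightarrow>\<^sub>0 'a::comm_semiring_1)"
  unfolding primitive_mp_def by (metis lookup_one_zero prime_elem_not_unit)

lemma primitive_mp_mult:
  fixes f g :: "monom \<Rightarrow>\<^sub>0 'a::comm_semiring_1_cancel"
  assumes "monomial_order le" and "primitive_mp f" and "primitive_mp g"
  shows "primitive_mp (f * g)"
  using assms prime_elem_not_dvd_coeffs_mult unfolding primitive_mp_def by blast

lemma primitive_mp_prod_list: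
  fixes fs :: "(monom \<Rightarrow>\<^sub>0 'a::comm_semiring_1_cancel) list"
  assumes "monomial_order le" and "\<forall>f\<in>set fs. primitive_mp f"
  shows "primitive_mp (prod_list fs)"
  using assms(2) by (induction fs) (auto intro: primitive_mp_one primitive_mp_mult[OF assms(1)])

lemma lookup_map_of_int:
  "Poly_Mapping.lookup (Poly_Mapping.map of_int f) k = of_int (Poly_Mapping.lookup f k)"
  by (simp add: map.rep_eq when_def)

lemma map_of_int_mult:
  fixes f g :: "'k::monoid_add \<Rightarrow>\<^sub>0 int"
  shows "Poly_Mapping.map (of_int :: int \<Rightarrow> 'a::comm_ring_1) (f * g) =
    Poly_Mapping.map of_int f * Poly_Mapping.map of_int g"
proof (rule poly_mapping_eqI)
  fix k
  have keys: "Poly_Mapping.keys (Poly_Mapping.map (of_int :: int \<Rightarrow> 'a) h) \<subseteq> Poly_Mapping.keys h"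
    for h :: "'k \<Rightarrow>\<^sub>0 int"
    by (auto simp: in_keys_iff lookup_map_of_int)
  have "Poly_Mapping.lookup (Poly_Mapping.map (of_int :: int \<Rightarrow> 'a) (f * g)) k =
      of_int (\<Sum>(a, b)\<in>Poly_Mapping.keys f \<times> Poly_Mapping.keys g.
        Poly_Mapping.lookup f a * Poly_Mapping.lookup g b when k = a + b)"
    by (simp add: lookup_map_of_int lookup_mult_finite[OF finite_keys order_refl finite_keys order_refl])
  also have "\<dots> = Poly_Mapping.lookup (Poly_Mapping.map of_int f * Poly_Mapping.map of_int g) k"
    by (auto simp: lookup_mult_finite[OF finite_keys keys finite_keys keys] lookup_map_of_int
        of_int_sum when_def case_prod_unfold intro!: sum.cong)
  finally show "Poly_Mapping.lookup (Poly_Mapping.map of_int (f * g)) k =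
      Poly_Mapping.lookup (Poly_Mapping.map of_int f * Poly_Mapping.map (of_int :: int \<Rightarrow> 'a) g) k"
    .
qed

lemma map_of_int_prod_list:
  "Poly_Mapping.map (of_int :: int \<Rightarrow> 'a::comm_ring_1) (prod_list fs) =
    prod_list (map (Poly_Mapping.map of_int) (fs :: ('k::monoid_add \<Rightarrow>\<^sub>0 int) list))"
  by (induction fs) (simp_all add: map_of_int_mult flip: single_one)

lemma lookup_of_int_mult:
  fixes f :: "'k::monoid_add \<Rightarrow>\<^sub>0 'a::ring_1"
  shows "Poly_Mapping.lookup (of_int c * f) k = of_int c * Poly_Mapping.lookup f k"
  by (simp flip: single_of_int mult_map_scale_conv_mult add: map.rep_eq when_def)

lemma prod_list_of_int_mult:
  fixes f :: "'b \<Rightarrow> 'a::comm_ring_1"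
  shows "prod_list (map (\<lambda>x. of_int (c x) * f x) xs) =
    of_int (prod_list (map c xs)) * prod_list (map f xs)"
  by (induction xs) (simp_all add: mult_ac)

lemma denom_pos: "denom q > 0"
  unfolding denom_def by (rule quotient_of_denom_pos')

lemma denom_dvd_iff: "denom q dvd k \<longleftrightarrow> of_int k * q \<in> \<int>"
proof -
  obtain a b where ab: "quotient_of q = (a, b)" by fastforce
  then have q: "q = of_int a / of_int b" and "b > 0" and "coprime a b"
    by (simp_all add: quotient_of_div quotient_of_denom_pos quotient_of_coprime)
  have "of_int k * q \<in> \<int> \<longleftrightarrow> b dvd k * a"
  proof
    assume "of_int k * q \<in> \<int>"
    then obtain z where "of_int k * q = of_int z" by (auto elim: Ints_cases)
    then have "k * a = z * b"
      using q \<open>b > 0\<close> by (simp add: field_simps flip: of_int_mult of_int_eq_iff)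
    then show "b dvd k * a" by simp
  next
    assume "b dvd k * a"
    then obtain z where "k * a = b * z" by blast
    then have "of_int k * q = of_int (b * z) / of_int b" using q by (simp flip: of_int_mult)
    then have "of_int k * q = of_int z" using \<open>b > 0\<close> by simp
    then show "of_int k * q \<in> \<int>" by simp
  qed
  also have "\<dots> \<longleftrightarrow> b dvd k"
    using \<open>coprime a b\<close> by (simp add: coprime_commute coprime_dvd_mult_left_iff)
  finally show ?thesis using ab unfolding denom_def by simp
qed

lemma denom_dvd_coeff_denom_lcm: "denom (Poly_Mapping.lookup f m) dvd coeff_denom_lcm f"
proof (cases "m \<in> Poly_Mapping.keys f")
  case True
  then show ?thesis unfolding coeff_denom_lcm_def by (simp add: dvd_Lcm)
next
  case False
  then show ?thesis by (simp add: in_keys_iff denom_def)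
qed

lemma coeff_denom_lcm_dvd_iff:
  "coeff_denom_lcm f dvd k \<longleftrightarrow> (\<forall>m. of_int k * Poly_Mapping.lookup f m \<in> \<int>)"
  using denom_dvd_coeff_denom_lcm dvd_trans
  by (auto simp: coeff_denom_lcm_def denom_dvd_iff[symmetric] intro!: Lcm_least)

lemma coeff_denom_lcm_pos: "coeff_denom_lcm f > 0"
proof -
  have "coeff_denom_lcm f \<noteq> 0"
    unfolding coeff_denom_lcm_def using denom_pos by (subst Lcm_0_iff) (auto simp: less_le)
  then show ?thesis unfolding coeff_denom_lcm_def by (simp add: order_le_neq_trans)
qed

definition clear_denominators :: "mpoly_q \<Rightarrow> monom \<Rightarrow>\<^sub>0 int" where
  "clear_denominators f = Poly_Mapping.map (\<lambda>q. \<lfloor>of_int (coeff_denom_lcm f) * q\<rfloor>) f"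

lemma lookup_clear_denominators:
  "of_int (Poly_Mapping.lookup (clear_denominators f) m) =
    of_int (coeff_denom_lcm f) * Poly_Mapping.lookup f m"
proof -
  have "of_int (coeff_denom_lcm f) * Poly_Mapping.lookup f m \<in> \<int>"
    using coeff_denom_lcm_dvd_iff[of f "coeff_denom_lcm f"] by simp
  then show ?thesis
    unfolding clear_denominators_def by (auto simp: map.rep_eq when_def elim: Ints_cases)
qed

lemma map_of_int_clear_denominators:
  "Poly_Mapping.map of_int (clear_denominators f) = of_int (coeff_denom_lcm f) * f"
  by (rule poly_mapping_eqI)
    (simp add: lookup_map_of_int lookup_clear_denominators lookup_of_int_mult)

text \<open>With \<open>L = coeff_denom_lcm f\<close>, a coefficient \<open>1\<close> forces every common divisor \<open>p\<close> of the
  coefficients of \<open>L f\<close> to divide \<open>L\<close>, and then \<open>L / p\<close> would already clear the denominators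
  of \<open>f\<close>.\<close>

lemma primitive_clear_denominators:
  assumes "Poly_Mapping.lookup f m\<^sub>0 = 1"
  shows "primitive_mp (clear_denominators f)"
  unfolding primitive_mp_def
proof (intro allI impI notI)
  fix p :: int
  assume p: "prime_elem p" and dvd: "\<forall>m. p dvd Poly_Mapping.lookup (clear_denominators f) m"
  define L where "L = coeff_denom_lcm f"
  have "Poly_Mapping.lookup (clear_denominators f) m\<^sub>0 = L"
    using lookup_clear_denominators[of f m\<^sub>0] assms unfolding L_def by simp
  then obtain e where L: "L = p * e" using dvd by (metis dvdE)
  have "of_int e * Poly_Mapping.lookup f m \<in> \<int>" for m
  proof -
    obtain z where "Poly_Mapping.lookup (clear_denominators f) m = p * z" using dvd by (meson dvdE)
    then have "of_int (p * z) = of_int (p * e) * Poly_Mapping.lookup f m"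
      using lookup_clear_denominators[of f m] unfolding L_def[symmetric] L by simp
    then have "of_int z = of_int e * Poly_Mapping.lookup f m"
      using p by (simp add: mult.assoc)
    then show ?thesis by (metis Ints_of_int)
  qed
  then have "L dvd e" unfolding L_def by (simp add: coeff_denom_lcm_dvd_iff)
  then obtain u where "e = L * u" by blast
  then have "L * (p * u) = L * 1" using L by (simp add: mult.left_commute)
  moreover have "L \<noteq> 0" using coeff_denom_lcm_pos[of f] unfolding L_def by simp
  ultimately have "p * u = 1" by (simp only: mult_cancel_left) simp
  then have "is_unit p" by (metis dvd_triv_left)
  then show False using p prime_elem_not_unit by blast
qed

lemma primitive_multiple_eq_coeff_denom_lcm:
  assumes "c > 0" and "primitive_mp H"
    and H: "Poly_Mapping.map of_int H = of_int c * f"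
  shows "c = coeff_denom_lcm f"
proof -
  define L where "L = coeff_denom_lcm f"
  have coeff: "of_int (Poly_Mapping.lookup H m) = of_int c * Poly_Mapping.lookup f m" for m
    using arg_cong[OF H, of "\<lambda>h. Poly_Mapping.lookup h m"]
    by (simp add: lookup_map_of_int lookup_of_int_mult)
  then have "L dvd c" unfolding L_def coeff_denom_lcm_dvd_iff by (metis Ints_of_int)
  then obtain k where c: "c = L * k" by blast
  have "k > 0"
    using c \<open>c > 0\<close> coeff_denom_lcm_pos[of f] unfolding L_def by (simp add: zero_less_mult_iff)
  have k_dvd: "k dvd Poly_Mapping.lookup H m" for m
  proof -
    have "of_int L * Poly_Mapping.lookup f m \<in> \<int>"
      using coeff_denom_lcm_dvd_iff[of f L] unfolding L_def by simp
    then obtain z where "of_int L * Poly_Mapping.lookup f m = of_int z" by (auto elim: Ints_cases)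
    then have "of_int (Poly_Mapping.lookup H m) = (of_int (k * z) :: rat)"
      using coeff[of m] unfolding c by (simp add: mult_ac)
    then show ?thesis by (simp only: of_int_eq_iff) simp
  qed
  have "k = 1"
  proof (rule ccontr)
    assume "k \<noteq> 1"
    with \<open>k > 0\<close> obtain q where "q dvd k" "prime q"
      using prime_divisor_exists[of k] by auto
    then show False
      using \<open>primitive_mp H\<close> k_dvd dvd_trans unfolding primitive_mp_def
      by (metis prime_imp_prime_elem)
  qed
  then show ?thesis using c unfolding L_def by simp
qed

theorem theorem6:
  fixes le :: "monom \<Rightarrow> monom \<Rightarrow> bool" and n :: nat
    and g :: mpoly_q and hs :: "mpoly_q list" and N :: int
  assumes "monomial_order le"
    and "in_vars n g"
    and "monic_mp le g"
    and "\<forall>h \<in> set hs. in_vars n h \<and> monic_mp le h"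
    and "g = prod_list hs"
    and "N = coeff_denom_lcm g"
  shows "\<forall>i < length hs. \<forall>m. \<bar>denom (Poly_Mapping.lookup (hs ! i) m)\<bar> \<le> N"
proof -
  define P where "P = prod_list (map coeff_denom_lcm hs)"
  define H where "H = prod_list (map clear_denominators hs)"
  have "primitive_mp H"
    unfolding H_def using assms(4)
    by (auto simp: monic_mp_def lead_coeff_mp_def
        intro!: primitive_mp_prod_list[OF assms(1)] primitive_clear_denominators)
  moreover have "P > 0" unfolding P_def by (induction hs) (simp_all add: coeff_denom_lcm_pos)
  moreover have "Poly_Mapping.map of_int H = of_int P * g"
    unfolding H_def P_def assms(5) map_of_int_prod_list map_map o_def map_of_int_clear_denominators
    by (rule prod_list_of_int_mult[where f = id, simplified])
  ultimately have "P = N" using assms(6) primitive_multiple_eq_coeff_denom_lcm by blast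
  have "denom (Poly_Mapping.lookup h m) dvd N" if "h \<in> set hs" for h m
    using denom_dvd_coeff_denom_lcm prod_list_dvd[of "coeff_denom_lcm h"] that \<open>P = N\<close>
    unfolding P_def by (metis dvd_trans image_eqI list.set_map)
  moreover have "N > 0" using assms(6) coeff_denom_lcm_pos by simp
  ultimately show ?thesis
    using denom_pos by (simp add: zdvd_imp_le order_less_imp_le)
qed

end
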